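(* The variety $\mathbf{K}_2$ is not locally finite; in fact its free algebra on one generator is infinite.
   Context: A pseudocomplemented de Morgan algebra is $(L;\wedge,\vee,{}^\ast,{}^\prime,0,1)$ with bounded distributive lattice reduct, pseudocomplement ${}^\ast$ and de Morgan involution ${}^\prime$. With $x^{0(\prime\ast)}=x$, $x^{(k+1)(\prime\ast)}=((x^{k(\prime\ast)})')^\ast$, $\mathbf{K}_2$ is the variety of such algebras satisfying $x\wedge x^{\prime\ast\prime}\le y\vee y^\ast$ (regularity), $x\wedge x'\le y\vee y'$ (Kleene), and $(x\wedge x^{\prime\ast})^{2(\prime\ast)}=(x\wedge x^{\prime\ast})^{3(\prime\ast)}$ (range $2$). *)

theory Defs
  imports Main
begin

text \<open>Algebras of signature (meet, join, pseudocomplement, de Morgan negation, 0, 1),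
  given with an explicit carrier set.\<close>
record 'a pmda =
  carrier :: "'a set"
  mt :: "'a \<Rightarrow> 'a \<Rightarrow> 'a"
  jn :: "'a \<Rightarrow> 'a \<Rightarrow> 'a"
  st :: "'a \<Rightarrow> 'a"
  pr :: "'a \<Rightarrow> 'a"
  bot :: 'a
  top :: 'a

definition leq :: "('a, 'b) pmda_scheme \<Rightarrow> 'a \<Rightarrow> 'a \<Rightarrow> bool" where
  "leq A x y \<longleftrightarrow> mt A x y = x"

definition pst :: "('a, 'b) pmda_scheme \<Rightarrow> nat \<Rightarrow> 'a \<Rightarrow> 'a" where
  "pst A k = (st A \<circ> pr A) ^^ k"

definition is_pmda :: "('a, 'b) pmda_scheme \<Rightarrow> bool" where
  "is_pmda A \<longleftrightarrow>
    (let C = carrier A in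
     bot A \<in> C \<and> top A \<in> C \<and>
     (\<forall>x\<in>C. \<forall>y\<in>C. mt A x y \<in> C \<and> jn A x y \<in> C) \<and>
     (\<forall>x\<in>C. st A x \<in> C \<and> pr A x \<in> C) \<and>
     \<comment> \<open>bounded distributive lattice\<close>
     (\<forall>x\<in>C. \<forall>y\<in>C. \<forall>z\<in>C.
        mt A x (mt A y z) = mt A (mt A x y) z \<and>
        jn A x (jn A y z) = jn A (jn A x y) z \<and>
        mt A x (jn A y z) = jn A (mt A x y) (mt A x z)) \<and>
     (\<forall>x\<in>C. \<forall>y\<in>C.
        mt A x y = mt A y x \<and> jn A x y = jn A y x \<and>
        mt A x (jn A x y) = x \<and> jn A x (mt A x y) = x) \<and>
     (\<forall>x\<in>C. jn A x (bot A) = x \<and> mt A x (top A) = x) \<and>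
     \<comment> \<open>pseudocomplement\<close>
     (\<forall>x\<in>C. \<forall>y\<in>C. leq A y (st A x) \<longleftrightarrow> mt A x y = bot A) \<and>
     \<comment> \<open>de Morgan involution\<close>
     (\<forall>x\<in>C. pr A (pr A x) = x) \<and>
     (\<forall>x\<in>C. \<forall>y\<in>C. pr A (jn A x y) = mt A (pr A x) (pr A y)))"

definition is_K2 :: "('a, 'b) pmda_scheme \<Rightarrow> bool" where
  "is_K2 A \<longleftrightarrow> is_pmda A \<and>
    (\<forall>x\<in>carrier A. \<forall>y\<in>carrier A.
       leq A (mt A x (pr A (st A (pr A x)))) (jn A y (st A y))) \<and>
    (\<forall>x\<in>carrier A. \<forall>y\<in>carrier A.
       leq A (mt A x (pr A x)) (jn A y (pr A y))) \<and>
    (\<forall>x\<in>carrier A.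
       pst A 2 (mt A x (st A (pr A x))) = pst A 3 (mt A x (st A (pr A x))))"

datatype trm = Var | Zero | One | Meet trm trm | Join trm trm | Star trm | Prime trm

primrec eval :: "('a, 'b) pmda_scheme \<Rightarrow> 'a \<Rightarrow> trm \<Rightarrow> 'a" where
  "eval A a Var = a"
| "eval A a Zero = bot A"
| "eval A a One = top A"
| "eval A a (Meet s t) = mt A (eval A a s) (eval A a t)"
| "eval A a (Join s t) = jn A (eval A a s) (eval A a t)"
| "eval A a (Star s) = st A (eval A a s)"
| "eval A a (Prime s) = pr A (eval A a s)"

text \<open>Identity s = t holds in K2. Algebras are taken with carriers inside nat;
  since the one-generated free algebra is countable, this captures exactly the
  identities of the variety.\<close>
definition K2_eq :: "trm \<Rightarrow> trm \<Rightarrow> bool" where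
  "K2_eq s t \<longleftrightarrow>
    (\<forall>A :: nat pmda. is_K2 A \<longrightarrow> (\<forall>a\<in>carrier A. eval A a s = eval A a t))"

definition free_K2_1 :: "trm set set" where
  "free_K2_1 = UNIV // {(s, t). K2_eq s t}"

end

theory Submission
  imports Defs "HOL-Library.Countable_Set"
begin

text \<open>For a reflexive symmetric relation R on V, the pairs (U, W) of subsets of V with
  W \<subseteq> \<box>U, where \<box> is the R-interior operator, form a regular Kleene pseudocomplemented
  de Morgan algebra. On the fan graph over \<nat> (a hub 0 adjacent to every vertex, the other
  vertices forming a path) the hub forces \<box>\<box>T \<in> {\<emptyset>, \<nat>}, which gives range 2. In this
  algebra the element ({0,1,2,3}, {2}) generates every ({n+1}, \<emptyset>): a term moves the
  point n+1 one step further along the path. The one-generated subalgebra is countable, so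
  it has an isomorphic copy on \<nat>; distinct values of unary terms at the generator are
  distinct classes of the free algebra, which is therefore infinite.\<close>

section \<open>Pair algebras of a reflexive symmetric relation\<close>

definition interior :: "('v \<Rightarrow> 'v \<Rightarrow> bool) \<Rightarrow> 'v set \<Rightarrow> 'v set" where
  "interior R T = {i. \<forall>j. R i j \<longrightarrow> j \<in> T}"

lemma interior_subset: "reflp R \<Longrightarrow> interior R T \<subseteq> T"
  by (auto simp: interior_def dest: reflpD)

lemma interior_mono: "T \<subseteq> T' \<Longrightarrow> interior R T \<subseteq> interior R T'"
  by (auto simp: interior_def)

lemma interior_Int: "interior R (T \<inter> T') = interior R T \<inter> interior R T'"
  by (auto simp: interior_def)

lemma interior_UNIV [simp]: "interior R UNIV = UNIV"
  by (simp add: interior_def)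

lemma interior_Compl_swap: "symp R \<Longrightarrow> U \<subseteq> interior R V \<Longrightarrow> - V \<subseteq> interior R (- U)"
  by (auto simp: interior_def dest: sympD)

definition pair_alg :: "('v \<Rightarrow> 'v \<Rightarrow> bool) \<Rightarrow> ('v set \<times> 'v set) pmda" where
  "pair_alg R = \<lparr>carrier = {p. snd p \<subseteq> interior R (fst p)},
     mt = (\<lambda>p q. (fst p \<inter> fst q, snd p \<inter> snd q)),
     jn = (\<lambda>p q. (fst p \<union> fst q, snd p \<union> snd q)),
     st = (\<lambda>p. (- fst p, interior R (- fst p))),
     pr = (\<lambda>p. (- snd p, - fst p)),
     bot = ({}, {}), top = (UNIV, UNIV)\<rparr>"

lemma pair_alg_simps [simp]:
  "carrier (pair_alg R) = {p. snd p \<subseteq> interior R (fst p)}"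
  "mt (pair_alg R) p q = (fst p \<inter> fst q, snd p \<inter> snd q)"
  "jn (pair_alg R) p q = (fst p \<union> fst q, snd p \<union> snd q)"
  "st (pair_alg R) p = (- fst p, interior R (- fst p))"
  "pr (pair_alg R) p = (- snd p, - fst p)"
  "bot (pair_alg R) = ({}, {})" "top (pair_alg R) = (UNIV, UNIV)"
  by (simp_all add: pair_alg_def)

lemma leq_pair_alg: "leq (pair_alg R) p q \<longleftrightarrow> fst p \<subseteq> fst q \<and> snd p \<subseteq> snd q"
  by (cases p; cases q) (auto simp: leq_def)

lemma is_pmda_pair_alg:
  assumes refl: "reflp R" and sym: "symp R"
  shows "is_pmda (pair_alg R)"
  unfolding is_pmda_def Let_def
proof (intro conjI ballI)
  show "bot (pair_alg R) \<in> carrier (pair_alg R)" "top (pair_alg R) \<in> carrier (pair_alg R)"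
    by auto
next
  fix x y assume x: "x \<in> carrier (pair_alg R)" and y: "y \<in> carrier (pair_alg R)"
  show "mt (pair_alg R) x y \<in> carrier (pair_alg R)"
    using x y by (auto simp: interior_Int)
  show "jn (pair_alg R) x y \<in> carrier (pair_alg R)"
    using x y interior_mono[of "fst x" "fst x \<union> fst y" R]
      interior_mono[of "fst y" "fst x \<union> fst y" R] by auto
  have "snd x \<subseteq> fst x" "interior R (- fst x) \<subseteq> - fst x"
    using x interior_subset[OF refl] by auto
  then show "leq (pair_alg R) y (st (pair_alg R) x) \<longleftrightarrow> mt (pair_alg R) x y = bot (pair_alg R)"
    using y interior_mono[of "fst y" "- fst x" R] by (auto simp: leq_pair_alg)
qed (use interior_Compl_swap[OF sym] in auto)

lemma pst_pair_alg:
  "pst (pair_alg R) k (U, interior R U) = ((interior R ^^ k) U, (interior R ^^ Suc k) U)"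
proof (induction k arbitrary: U)
  case 0
  then show ?case by (simp add: pst_def)
next
  case (Suc k)
  have "pst (pair_alg R) (Suc k) (U, interior R U)
      = pst (pair_alg R) k (st (pair_alg R) (pr (pair_alg R) (U, interior R U)))"
    by (simp only: pst_def funpow_Suc_right comp_apply)
  also have "\<dots> = pst (pair_alg R) k (interior R U, interior R (interior R U))"
    by simp
  also have "\<dots> = ((interior R ^^ Suc k) U, (interior R ^^ Suc (Suc k)) U)"
    using Suc by (simp only: funpow_Suc_right comp_apply)
  finally show ?case .
qed

lemma is_K2_pair_alg:
  assumes refl: "reflp R" and sym: "symp R"
    and range2: "\<And>T. interior R (interior R (interior R T)) = interior R (interior R T)"
  shows "is_K2 (pair_alg R)"
  unfolding is_K2_def
proof (intro conjI is_pmda_pair_alg[OF refl sym] ballI)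
  fix x y assume x: "x \<in> carrier (pair_alg R)" and y: "y \<in> carrier (pair_alg R)"
  show "leq (pair_alg R) (mt (pair_alg R) x (pr (pair_alg R) (st (pair_alg R) (pr (pair_alg R) x))))
          (jn (pair_alg R) y (st (pair_alg R) y))"
    by (auto simp: leq_pair_alg)
  show "leq (pair_alg R) (mt (pair_alg R) x (pr (pair_alg R) x)) (jn (pair_alg R) y (pr (pair_alg R) y))"
    using x y interior_subset[OF refl] by (fastforce simp: leq_pair_alg)
next
  fix x assume "x \<in> carrier (pair_alg R)"
  then have "snd x \<subseteq> fst x"
    using interior_subset[OF refl] by auto
  then have z: "mt (pair_alg R) x (st (pair_alg R) (pr (pair_alg R) x)) = (snd x, interior R (snd x))"
    using interior_subset[OF refl, of "snd x"] by auto
  show "pst (pair_alg R) 2 (mt (pair_alg R) x (st (pair_alg R) (pr (pair_alg R) x)))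
      = pst (pair_alg R) 3 (mt (pair_alg R) x (st (pair_alg R) (pr (pair_alg R) x)))"
    unfolding z pst_pair_alg by (simp add: numeral_eq_Suc range2)
qed

section \<open>Copies of one-generated subalgebras on \<nat>\<close>

definition subuniverse :: "('a, 'b) pmda_scheme \<Rightarrow> 'a set \<Rightarrow> bool" where
  "subuniverse P S \<longleftrightarrow> S \<subseteq> carrier P \<and> bot P \<in> S \<and> top P \<in> S \<and>
     (\<forall>x\<in>S. \<forall>y\<in>S. mt P x y \<in> S \<and> jn P x y \<in> S) \<and>
     (\<forall>x\<in>S. st P x \<in> S \<and> pr P x \<in> S)"

lemma subuniverse_carrier: "is_pmda P \<Longrightarrow> subuniverse P (carrier P)"
  unfolding is_pmda_def Let_def subuniverse_def by blast

lemma subuniverse_range_eval: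
  assumes "subuniverse P S" "a \<in> S"
  shows "subuniverse P (range (eval P a))"
proof -
  have "eval P a t \<in> S" for t
    using assms by (induction t) (auto simp: subuniverse_def)
  moreover have "bot P \<in> range (eval P a)" "top P \<in> range (eval P a)"
    "mt P (eval P a s) (eval P a t) \<in> range (eval P a)"
    "jn P (eval P a s) (eval P a t) \<in> range (eval P a)"
    "st P (eval P a s) \<in> range (eval P a)" "pr P (eval P a s) \<in> range (eval P a)" for s t
    using rangeI[of "eval P a" Zero] rangeI[of "eval P a" One] rangeI[of "eval P a" "Meet s t"]
      rangeI[of "eval P a" "Join s t"] rangeI[of "eval P a" "Star s"] rangeI[of "eval P a" "Prime s"]
    by simp_all
  ultimately show ?thesis
    using assms(1) unfolding subuniverse_def by blast
qed

definition transport :: "('a, 'b) pmda_scheme \<Rightarrow> 'a set \<Rightarrow> ('a \<Rightarrow> nat) \<Rightarrow> nat pmda" where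
  "transport P S h = \<lparr>carrier = h ` S,
     mt = (\<lambda>m n. h (mt P (inv_into S h m) (inv_into S h n))),
     jn = (\<lambda>m n. h (jn P (inv_into S h m) (inv_into S h n))),
     st = (\<lambda>m. h (st P (inv_into S h m))),
     pr = (\<lambda>m. h (pr P (inv_into S h m))),
     bot = h (bot P), top = h (top P)\<rparr>"

locale pmda_transport =
  fixes P :: "('a, 'b) pmda_scheme" and S :: "'a set" and h :: "'a \<Rightarrow> nat"
  assumes subuniverse: "subuniverse P S" and inj: "inj_on h S"
begin

abbreviation "A \<equiv> transport P S h"

lemma closed [simp]:
  "bot P \<in> S" "top P \<in> S"
  "x \<in> S \<Longrightarrow> y \<in> S \<Longrightarrow> mt P x y \<in> S" "x \<in> S \<Longrightarrow> y \<in> S \<Longrightarrow> jn P x y \<in> S"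
  "x \<in> S \<Longrightarrow> st P x \<in> S" "x \<in> S \<Longrightarrow> pr P x \<in> S"
  using subuniverse by (simp_all add: subuniverse_def)

lemma in_carrier: "x \<in> S \<Longrightarrow> x \<in> carrier P"
  using subuniverse by (auto simp: subuniverse_def)

lemma pst_closed [simp]: "x \<in> S \<Longrightarrow> pst P k x \<in> S"
  by (induction k arbitrary: x) (simp_all add: pst_def funpow_Suc_right del: funpow.simps)

lemma transport_simps [simp]:
  "x \<in> S \<Longrightarrow> y \<in> S \<Longrightarrow> mt A (h x) (h y) = h (mt P x y)"
  "x \<in> S \<Longrightarrow> y \<in> S \<Longrightarrow> jn A (h x) (h y) = h (jn P x y)"
  "x \<in> S \<Longrightarrow> st A (h x) = h (st P x)"
  "x \<in> S \<Longrightarrow> pr A (h x) = h (pr P x)"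
  "bot A = h (bot P)" "top A = h (top P)" "carrier A = h ` S"
  using inj by (simp_all add: transport_def)

lemma h_eq_iff [simp]: "x \<in> S \<Longrightarrow> y \<in> S \<Longrightarrow> h x = h y \<longleftrightarrow> x = y"
  using inj by (meson inj_on_eq_iff)

lemma leq_transport [simp]: "x \<in> S \<Longrightarrow> y \<in> S \<Longrightarrow> leq A (h x) (h y) \<longleftrightarrow> leq P x y"
  by (simp add: leq_def)

lemma pst_transport [simp]: "x \<in> S \<Longrightarrow> pst A k (h x) = h (pst P k x)"
  by (induction k arbitrary: x) (simp_all add: pst_def funpow_Suc_right del: funpow.simps)

lemma eval_transport: "x \<in> S \<Longrightarrow> eval A (h x) t = h (eval P x t) \<and> eval P x t \<in> S"
  by (induction t) simp_all

lemma is_pmda_transport: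
  assumes "is_pmda P"
  shows "is_pmda A"
  unfolding is_pmda_def Let_def transport_simps(7)
  by (intro conjI ballI; (safe elim!: imageE)?;
      (simp only: transport_simps closed h_eq_iff leq_transport imageI)?;
      use assms[unfolded is_pmda_def Let_def] in_carrier in blast)

lemma is_K2_transport:
  assumes "is_K2 P"
  shows "is_K2 A"
proof -
  have "is_pmda A"
    using assms is_pmda_transport by (simp add: is_K2_def)
  then show ?thesis
    unfolding is_K2_def transport_simps(7)
    by (intro conjI ballI; (safe elim!: imageE)?;
        (simp only: transport_simps closed pst_closed h_eq_iff leq_transport pst_transport)?;
        use assms[unfolded is_K2_def] in_carrier in blast)
qed

end

instance trm :: countable
  by countable_datatype

lemma nat_copy_of_one_generated:
  assumes K2: "is_K2 P" and a: "a \<in> carrier P" and inf: "infinite (range (eval P a))"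
  shows "\<exists>A :: nat pmda. is_K2 A \<and> (\<exists>b\<in>carrier A. infinite {eval A b t | t. True})"
proof -
  define S where "S = range (eval P a)"
  have "is_pmda P"
    using K2 by (simp add: is_K2_def)
  then have sub: "subuniverse P S"
    unfolding S_def using a by (blast intro: subuniverse_range_eval subuniverse_carrier)
  obtain h :: "'a \<Rightarrow> nat" where inj: "inj_on h S"
    using countableE[of S] unfolding S_def by blast
  interpret pmda_transport P S h
    using sub inj by unfold_locales
  have aS: "a \<in> S"
    unfolding S_def by (metis eval.simps(1) rangeI)
  have "{eval A (h a) t | t. True} = h ` S"
    using eval_transport[OF aS] unfolding S_def by auto
  moreover have "infinite (h ` S)"
    using inf inj finite_imageD unfolding S_def by blast
  moreover have "h a \<in> carrier A"
    using aS by simp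
  ultimately show ?thesis
    using is_K2_transport[OF K2] by metis
qed

lemma infinite_free_K2_1:
  fixes A :: "nat pmda"
  assumes "is_K2 A" "a \<in> carrier A" "infinite {eval A a t | t. True}"
  shows "infinite free_K2_1"
proof
  assume fin: "finite free_K2_1"
  define value_of where "value_of C = eval A a (SOME t. t \<in> C)" for C
  have "{eval A a t | t. True} \<subseteq> value_of ` free_K2_1"
  proof clarify
    fix t
    let ?C = "{(s, t). K2_eq s t} `` {t}"
    have "?C \<in> free_K2_1"
      unfolding free_K2_1_def by (rule quotientI) simp
    moreover have "t \<in> ?C"
      by (simp add: K2_eq_def)
    then have "K2_eq t (SOME s. s \<in> ?C)"
      using someI[of "\<lambda>s. s \<in> ?C"] by simp
    then have "eval A a t = value_of ?C"
      using assms(1,2) unfolding value_of_def K2_eq_def by blast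
    ultimately show "eval A a t \<in> value_of ` free_K2_1"
      by (metis imageI)
  qed
  then show False
    using fin assms(3) finite_subset by blast
qed

section \<open>The fan graph\<close>

definition fan :: "nat \<Rightarrow> nat \<Rightarrow> bool" where
  "fan i j \<longleftrightarrow> i = 0 \<or> j = 0 \<or> (i \<le> Suc j \<and> j \<le> Suc i)"

lemma reflp_fan: "reflp fan"
  by (simp add: reflp_def fan_def)

lemma symp_fan: "symp fan"
  by (auto simp: symp_def fan_def)

lemma hub_in_interior_fan: "0 \<in> interior fan T \<longleftrightarrow> T = UNIV"
  by (auto simp: interior_def fan_def)

lemma interior_fan_eq_empty: "0 \<notin> T \<Longrightarrow> interior fan T = {}"
  by (auto simp: interior_def fan_def)

lemma interior2_fan: "interior fan (interior fan T) = (if T = UNIV then UNIV else {})"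
  by (simp add: hub_in_interior_fan interior_fan_eq_empty)

lemma interior3_fan: "interior fan (interior fan (interior fan T)) = interior fan (interior fan T)"
proof (cases "T = UNIV")
  case False
  then have "interior fan T \<noteq> UNIV"
    using interior_subset[OF reflp_fan, of T] by blast
  with False show ?thesis
    by (simp add: interior2_fan interior_fan_eq_empty)
qed simp

lemma is_K2_pair_alg_fan: "is_K2 (pair_alg fan)"
  using is_K2_pair_alg[OF reflp_fan symp_fan interior3_fan] .

lemma interior_fan_Compl_singleton: "interior fan (- {k}) = {i. \<not> fan i k}"
  by (auto simp: interior_def)

text \<open>Stated with Suc 0, the simp normal form of 1 :: nat.\<close>
lemma interior_fan_0123: "interior fan {0, Suc 0, 2, 3} = {Suc 0, 2}"
proof
  show "interior fan {0, Suc 0, 2, 3} \<subseteq> {Suc 0, 2}"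
  proof
    fix i assume i: "i \<in> interior fan {0, Suc 0, 2, 3}"
    have "(4::nat) \<notin> {0, Suc 0, 2, 3}" by simp
    then have "0 \<notin> interior fan {0, Suc 0, 2, 3}"
      unfolding hub_in_interior_fan by blast
    then have "i \<noteq> 0" using i by metis
    moreover have "fan i (Suc i)" by (simp add: fan_def)
    then have "Suc i \<in> {0, Suc 0, 2, 3}" using i by (auto simp: interior_def)
    ultimately show "i \<in> {Suc 0, 2}" by auto
  qed
  show "{Suc 0, 2} \<subseteq> interior fan {0, Suc 0, 2, 3}" by (auto simp: interior_def fan_def)
qed

definition fan_gen :: "nat set \<times> nat set" where
  "fan_gen = ({0, 1, 2, 3}, {2})"

lemma fan_gen_in_carrier: "fan_gen \<in> carrier (pair_alg fan)"
  by (simp add: fan_gen_def interior_fan_0123)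

text \<open>The value of point_term (n+2) consists of the neighbours of n+2 that are not
  neighbours of n+1, that is, of n+3 alone.\<close>
fun point_term :: "nat \<Rightarrow> trm" where
  "point_term 0 = Star (Join (Star (Prime Var)) (Prime (Star (Star Var))))"
| "point_term (Suc 0) = Star (Prime Var)"
| "point_term (Suc (Suc n)) =
     Meet (Prime (Star (point_term (Suc n)))) (Star (Prime (Star (point_term n))))"

lemma eval_point_term: "eval (pair_alg fan) fan_gen (point_term n) = ({Suc n}, {})"
proof (induction n rule: point_term.induct)
  case 1
  have "interior fan (- {0, Suc 0, 2, 3}) = {}"
    by (rule interior_fan_eq_empty) simp
  moreover have "- insert 2 (- {Suc 0, 2}) = {Suc 0 :: nat}"
    by auto
  ultimately show ?case
    by (simp add: fan_gen_def interior_fan_0123 interior_fan_eq_empty)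
next
  case 2
  show ?case
    by (simp add: fan_gen_def interior_fan_eq_empty)
next
  case (3 n)
  have "- interior fan (- {Suc (Suc n)}) \<inter> interior fan (- {Suc n}) = {Suc (Suc (Suc n))}"
    unfolding interior_fan_Compl_singleton by (auto simp: fan_def)
  moreover have "interior fan (interior fan (- {Suc n})) = {}"
    unfolding interior2_fan by auto
  ultimately show ?case
    using 3 by simp
qed

lemma infinite_range_eval_fan_gen: "infinite (range (eval (pair_alg fan) fan_gen))"
proof -
  have "inj (\<lambda>n. ({Suc n}, {} :: nat set))"
    by (auto intro: injI)
  moreover have "range (\<lambda>n. ({Suc n}, {} :: nat set)) \<subseteq> range (eval (pair_alg fan) fan_gen)"
    by (rule image_subsetI) (metis eval_point_term rangeI)
  ultimately show ?thesis
    by (meson finite_imageD infinite_UNIV_nat infinite_super)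
qed

theorem theorem4p14:
  shows "(\<exists>A :: nat pmda. is_K2 A \<and>
            (\<exists>a\<in>carrier A. infinite {eval A a t | t. True}))
         \<and> infinite free_K2_1"
proof -
  have "\<exists>A :: nat pmda. is_K2 A \<and> (\<exists>a\<in>carrier A. infinite {eval A a t | t. True})"
    using nat_copy_of_one_generated[OF is_K2_pair_alg_fan fan_gen_in_carrier
        infinite_range_eval_fan_gen] .
  with infinite_free_K2_1 show ?thesis
    by blast
qed

end
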